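(* Let $n$ and $k$ be integers with $1\le k<n/2$. Then $\mathrm{DGP}(n,k)$ is edge-transitive if and only if $A(n,k)\neq B(n,k)$.
   Context: $\mathrm{DGP}(n,k)$ is the graph with vertex set $\{(u_i,j),(v_i,j): 0\le i\le n-1,\ j\in\{0,1\}\}$ and edges $\{(u_i,j),(u_{i+1},1-j)\}$, $\{(u_i,j),(v_i,1-j)\}$ (spokes, forming the set $\mathcal{S}$), $\{(v_i,j),(v_{i+k},1-j)\}$, subscripts mod $n$ (the canonical double cover of the generalized Petersen graph $\mathrm{GP}(n,k)$). $A(n,k)=\mathrm{Aut}(\mathrm{DGP}(n,k))$ and $B(n,k)$ is the setwise stabilizer of $\mathcal{S}$ in $A(n,k)$. *)

theory Defs
  imports Main
begin

text \<open>Vertices of DGP(n,k): U i j stands for (u_i, j), V i j for (v_i, j);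
  the layer index j in {0,1} is encoded as a boolean (False = 0, True = 1),
  so 1 - j is \<not> j.\<close>
datatype dvert = U nat bool | V nat bool

definition dgp_verts :: "nat \<Rightarrow> dvert set" where
  "dgp_verts n = {U i j | i j. i < n} \<union> {V i j | i j. i < n}"

definition dgp_outer :: "nat \<Rightarrow> dvert set set" where
  "dgp_outer n = {{U i j, U ((i + 1) mod n) (\<not> j)} | i j. i < n}"

definition dgp_spokes :: "nat \<Rightarrow> dvert set set" where
  "dgp_spokes n = {{U i j, V i (\<not> j)} | i j. i < n}"

definition dgp_inner :: "nat \<Rightarrow> nat \<Rightarrow> dvert set set" where
  "dgp_inner n k = {{V i j, V ((i + k) mod n) (\<not> j)} | i j. i < n}"

definition dgp_edges :: "nat \<Rightarrow> nat \<Rightarrow> dvert set set" where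
  "dgp_edges n k = dgp_outer n \<union> dgp_spokes n \<union> dgp_inner n k"

definition graph_aut :: "'a set \<Rightarrow> 'a set set \<Rightarrow> ('a \<Rightarrow> 'a) set" where
  "graph_aut Vs E = {f. bij_betw f Vs Vs \<and> (\<forall>x. x \<notin> Vs \<longrightarrow> f x = x) \<and>
      (\<forall>x\<in>Vs. \<forall>y\<in>Vs. {x, y} \<in> E \<longleftrightarrow> {f x, f y} \<in> E)}"

definition edge_transitive :: "'a set \<Rightarrow> 'a set set \<Rightarrow> bool" where
  "edge_transitive Vs E \<longleftrightarrow> (\<forall>e\<in>E. \<forall>e'\<in>E. \<exists>f\<in>graph_aut Vs E. f ` e = e')"

definition A_grp :: "nat \<Rightarrow> nat \<Rightarrow> (dvert \<Rightarrow> dvert) set" where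
  "A_grp n k = graph_aut (dgp_verts n) (dgp_edges n k)"

definition B_grp :: "nat \<Rightarrow> nat \<Rightarrow> (dvert \<Rightarrow> dvert) set" where
  "B_grp n k = {f \<in> A_grp n k. (\<lambda>e. f ` e) ` dgp_spokes n = dgp_spokes n}"

end

theory Submission
  imports Defs
begin

(* Rotating the index i and possibly swapping the two layers gives automorphisms that act
   transitively on each of the three edge classes: outer edges, spokes and inner edges.
   So if DGP(n,k) is edge-transitive, some automorphism maps a spoke onto an outer edge and
   does not stabilise the spokes. Conversely, if some automorphism does not stabilise the
   spokes, then some automorphism g maps a spoke uv (u outer, v inner vertex) onto, say, an
   outer edge. Then g v is an outer vertex, so g maps the inner edge at v onto an outer edge
   or a spoke. Hence the spokes are in the orbit of the outer edges, and the inner edges are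
   in the orbit of one of the two, so all edges lie in a single orbit. The case where the
   spoke goes to an inner edge is dual. *)

lemma graph_aut_comp:
  assumes f: "f \<in> graph_aut Vs E" and g: "g \<in> graph_aut Vs E"
  shows "f \<circ> g \<in> graph_aut Vs E"
proof -
  have "bij_betw (f \<circ> g) Vs Vs"
    using f g bij_betw_trans unfolding graph_aut_def by blast
  moreover have "{x, y} \<in> E \<longleftrightarrow> {f (g x), f (g y)} \<in> E" if "x \<in> Vs" "y \<in> Vs" for x y
  proof -
    have "g x \<in> Vs" "g y \<in> Vs"
      using g that bij_betw_apply unfolding graph_aut_def by fast+
    then show ?thesis
      using f g that unfolding graph_aut_def by blast
  qed
  ultimately show ?thesis
    using f g unfolding graph_aut_def by auto
qed

lemma graph_autI_inverse:
  assumes "\<forall>x\<in>Vs. f x \<in> Vs" and "\<forall>x\<in>Vs. g x \<in> Vs"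
    and "\<forall>x\<in>Vs. g (f x) = x" and "\<forall>x\<in>Vs. f (g x) = x"
    and "\<forall>x. x \<notin> Vs \<longrightarrow> f x = x"
    and "\<And>x y. x \<in> Vs \<Longrightarrow> y \<in> Vs \<Longrightarrow> {x, y} \<in> E \<Longrightarrow> {f x, f y} \<in> E"
    and "\<And>x y. x \<in> Vs \<Longrightarrow> y \<in> Vs \<Longrightarrow> {x, y} \<in> E \<Longrightarrow> {g x, g y} \<in> E"
  shows "f \<in> graph_aut Vs E"
proof -
  have "bij_betw f Vs Vs"
    using assms(1-4) by (intro bij_betw_byWitness[where f' = g]) auto
  moreover have "{f x, f y} \<in> E \<Longrightarrow> {x, y} \<in> E" if "x \<in> Vs" "y \<in> Vs" for x y
    using assms(1,3,7)[rule_format] that by metis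
  ultimately show ?thesis
    using assms(5,6) unfolding graph_aut_def by blast
qed

lemma graph_aut_inverse:
  assumes f: "f \<in> graph_aut Vs E"
  obtains g where "g \<in> graph_aut Vs E" and "\<forall>x\<in>Vs. g (f x) = x" and "\<forall>x\<in>Vs. f (g x) = x"
proof
  define g where "g x = (if x \<in> Vs then inv_into Vs f x else x)" for x
  have bij: "bij_betw f Vs Vs"
    using f unfolding graph_aut_def by blast
  show gf: "\<forall>x\<in>Vs. g (f x) = x"
    using bij bij_betw_apply bij_betw_inv_into_left unfolding g_def by fastforce
  show fg: "\<forall>x\<in>Vs. f (g x) = x"
    using bij bij_betw_inv_into_right unfolding g_def by fastforce
  have g_Vs: "\<forall>x\<in>Vs. g x \<in> Vs"
    using bij bij_betw_apply bij_betw_inv_into unfolding g_def by fastforce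
  have f_edge: "{x, y} \<in> E \<longleftrightarrow> {f x, f y} \<in> E" if "x \<in> Vs" "y \<in> Vs" for x y
    using f that unfolding graph_aut_def by blast
  show "g \<in> graph_aut Vs E"
  proof (rule graph_autI_inverse[where g = f])
    show "{g x, g y} \<in> E" if "x \<in> Vs" "y \<in> Vs" "{x, y} \<in> E" for x y
      using f_edge[of "g x" "g y"] g_Vs fg that by auto
  qed (use g_Vs gf fg bij bij_betw_apply f_edge in \<open>auto simp: g_def\<close>)
qed

lemma graph_aut_image_edge:
  "f \<in> graph_aut Vs E \<Longrightarrow> x \<in> Vs \<Longrightarrow> y \<in> Vs \<Longrightarrow> {x, y} \<in> E \<Longrightarrow> f ` {x, y} \<in> E"
  unfolding graph_aut_def by auto

definition aut_related :: "'a set \<Rightarrow> 'a set set \<Rightarrow> 'a set \<Rightarrow> 'a set \<Rightarrow> bool" where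
  "aut_related Vs E X Y \<longleftrightarrow> (\<exists>f\<in>graph_aut Vs E. f ` X = Y)"

lemma aut_related_image: "f \<in> graph_aut Vs E \<Longrightarrow> aut_related Vs E X (f ` X)"
  unfolding aut_related_def by blast

lemma aut_related_trans:
  "aut_related Vs E X Y \<Longrightarrow> aut_related Vs E Y Z \<Longrightarrow> aut_related Vs E X Z"
  unfolding aut_related_def by (metis graph_aut_comp image_comp)

lemma aut_related_sym:
  assumes "aut_related Vs E X Y" and "X \<subseteq> Vs"
  shows "aut_related Vs E Y X"
proof -
  obtain f where f: "f \<in> graph_aut Vs E" and Y: "Y = f ` X"
    using assms(1) unfolding aut_related_def by blast
  obtain g where g: "g \<in> graph_aut Vs E" and gf: "\<forall>x\<in>Vs. g (f x) = x"
    by (metis graph_aut_inverse[OF f])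
  have "g ` Y = (\<lambda>x. x) ` X"
    unfolding Y image_image using gf assms(2) by (intro image_cong) auto
  then show ?thesis
    using g unfolding aut_related_def by blast
qed

lemma aut_related_common_source:
  "aut_related Vs E X Y \<Longrightarrow> aut_related Vs E X Z \<Longrightarrow> X \<subseteq> Vs \<Longrightarrow> aut_related Vs E Y Z"
  by (meson aut_related_sym aut_related_trans)

lemma edge_transitiveI:
  assumes "\<forall>e\<in>E. e \<subseteq> Vs" and "e\<^sub>0 \<in> E" and "\<forall>e\<in>E. aut_related Vs E e\<^sub>0 e"
  shows "edge_transitive Vs E"
  unfolding edge_transitive_def aut_related_def[symmetric]
proof (intro ballI)
  fix e e' assume "e \<in> E" "e' \<in> E"
  then show "aut_related Vs E e e'"
    using assms aut_related_common_source by metis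
qed

lemma graph_aut_setwise_stable:
  assumes maps_into: "\<forall>g\<in>graph_aut Vs E. \<forall>e\<in>F. g ` e \<in> F"
    and F_Vs: "\<forall>e\<in>F. e \<subseteq> Vs" and f: "f \<in> graph_aut Vs E"
  shows "(\<lambda>e. f ` e) ` F = F"
proof
  show "(\<lambda>e. f ` e) ` F \<subseteq> F"
    using maps_into f by blast
  show "F \<subseteq> (\<lambda>e. f ` e) ` F"
  proof
    fix e assume e: "e \<in> F"
    obtain g where g: "g \<in> graph_aut Vs E" and fg: "\<forall>x\<in>Vs. f (g x) = x"
      by (metis graph_aut_inverse[OF f])
    have "f ` (g ` e) = (\<lambda>x. x) ` e"
      unfolding image_image using fg F_Vs e by (intro image_cong) auto
    moreover have "g ` e \<in> F"
      using maps_into g e by blast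
    ultimately show "e \<in> (\<lambda>e. f ` e) ` F"
      by (metis image_eqI image_ident)
  qed
qed

lemma dgp_verts_simps [simp]:
  "U i j \<in> dgp_verts n \<longleftrightarrow> i < n" "V i j \<in> dgp_verts n \<longleftrightarrow> i < n"
  unfolding dgp_verts_def by auto

lemma dgp_outerI: "i < n \<Longrightarrow> {U i j, U ((i + 1) mod n) (\<not> j)} \<in> dgp_outer n"
  unfolding dgp_outer_def by blast

lemma dgp_spokesI: "i < n \<Longrightarrow> {U i j, V i (\<not> j)} \<in> dgp_spokes n"
  unfolding dgp_spokes_def by blast

lemma dgp_innerI: "i < n \<Longrightarrow> {V i j, V ((i + k) mod n) (\<not> j)} \<in> dgp_inner n k"
  unfolding dgp_inner_def by blast

lemma dgp_edge_cases:
  assumes "e \<in> dgp_edges n k"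
  obtains (outer) i j where "i < n" "e = {U i j, U ((i + 1) mod n) (\<not> j)}"
  | (spoke) i j where "i < n" "e = {U i j, V i (\<not> j)}"
  | (inner) i j where "i < n" "e = {V i j, V ((i + k) mod n) (\<not> j)}"
  using assms unfolding dgp_edges_def dgp_outer_def dgp_spokes_def dgp_inner_def by blast

lemma dgp_edge_pair:
  assumes "e \<in> dgp_edges n k"
  obtains x y where "x \<in> dgp_verts n" "y \<in> dgp_verts n" "e = {x, y}"
  using assms
proof (cases rule: dgp_edge_cases)
  case (outer i j)
  then show ?thesis
    using that[of "U i j" "U ((i + 1) mod n) (\<not> j)"] by simp
next
  case (spoke i j)
  then show ?thesis
    using that[of "U i j" "V i (\<not> j)"] by simp
next
  case (inner i j)
  then show ?thesis
    using that[of "V i j" "V ((i + k) mod n) (\<not> j)"] by simp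
qed

lemma dgp_edge_subset_verts: "e \<in> dgp_edges n k \<Longrightarrow> e \<subseteq> dgp_verts n"
  by (erule dgp_edge_pair) simp

lemma A_grp_image_edge: "f \<in> A_grp n k \<Longrightarrow> e \<in> dgp_edges n k \<Longrightarrow> f ` e \<in> dgp_edges n k"
  unfolding A_grp_def by (metis dgp_edge_pair graph_aut_image_edge)

fun is_U :: "dvert \<Rightarrow> bool" where
  "is_U (U _ _) = True"
| "is_U (V _ _) = False"

lemma dgp_outer_is_U: "e \<in> dgp_outer n \<Longrightarrow> x \<in> e \<Longrightarrow> is_U x"
  unfolding dgp_outer_def by auto

lemma dgp_inner_not_is_U: "e \<in> dgp_inner n k \<Longrightarrow> x \<in> e \<Longrightarrow> \<not> is_U x"
  unfolding dgp_inner_def by auto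

lemma dgp_outer_spokes_disjoint: "dgp_outer n \<inter> dgp_spokes n = {}"
  unfolding dgp_outer_def dgp_spokes_def by (auto simp: doubleton_eq_iff)

definition dgp_shift :: "nat \<Rightarrow> nat \<Rightarrow> bool \<Rightarrow> dvert \<Rightarrow> dvert" where
  "dgp_shift n t b x = (case x of
      U i j \<Rightarrow> if i < n then U ((i + t) mod n) (j \<noteq> b) else U i j
    | V i j \<Rightarrow> if i < n then V ((i + t) mod n) (j \<noteq> b) else V i j)"

lemma dgp_shift_simps [simp]:
  "dgp_shift n t b (U i j) = (if i < n then U ((i + t) mod n) (j \<noteq> b) else U i j)"
  "dgp_shift n t b (V i j) = (if i < n then V ((i + t) mod n) (j \<noteq> b) else V i j)"
  by (simp_all add: dgp_shift_def)

lemma dgp_shift_verts: "x \<in> dgp_verts n \<Longrightarrow> dgp_shift n t b x \<in> dgp_verts n"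
  by (cases x) auto

lemma dgp_shift_shift:
  "x \<in> dgp_verts n \<Longrightarrow> dgp_shift n s c (dgp_shift n t b x) = dgp_shift n (t + s) (b \<noteq> c) x"
  by (cases x) (auto simp: mod_add_left_eq add.assoc)

lemma dgp_shift_period: "x \<in> dgp_verts n \<Longrightarrow> t mod n = 0 \<Longrightarrow> dgp_shift n t False x = x"
  by (cases x) (auto simp: mod_add_right_eq[symmetric])

lemma dgp_shift_edge:
  assumes "e \<in> dgp_edges n k"
  shows "dgp_shift n t b ` e \<in> dgp_edges n k"
  using assms
proof (cases rule: dgp_edge_cases)
  case (outer i j)
  then have "dgp_shift n t b ` e =
      {U ((i + t) mod n) (j \<noteq> b), U (((i + t) mod n + 1) mod n) (\<not> (j \<noteq> b))}"
    by (auto simp: mod_simps ac_simps)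
  moreover have "\<dots> \<in> dgp_outer n"
    using outer by (intro dgp_outerI) simp
  ultimately show ?thesis
    by (simp add: dgp_edges_def)
next
  case (spoke i j)
  then have "dgp_shift n t b ` e = {U ((i + t) mod n) (j \<noteq> b), V ((i + t) mod n) (\<not> (j \<noteq> b))}"
    by auto
  moreover have "\<dots> \<in> dgp_spokes n"
    using spoke by (intro dgp_spokesI) simp
  ultimately show ?thesis
    by (simp add: dgp_edges_def)
next
  case (inner i j)
  then have "dgp_shift n t b ` e =
      {V ((i + t) mod n) (j \<noteq> b), V (((i + t) mod n + k) mod n) (\<not> (j \<noteq> b))}"
    by (auto simp: mod_simps ac_simps)
  moreover have "\<dots> \<in> dgp_inner n k"
    using inner by (intro dgp_innerI) simp
  ultimately show ?thesis
    by (simp add: dgp_edges_def)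
qed

lemma dgp_shift_in_A_grp: "dgp_shift n t b \<in> A_grp n k"
  unfolding A_grp_def
proof (rule graph_autI_inverse[where g = "dgp_shift n (n - t mod n) b"])
  have "t + (n - t mod n) = n + t div n * n" if "0 < n"
    using div_mult_mod_eq[of t n] mod_le_divisor[OF that, of t] by linarith
  then have "(t + (n - t mod n)) mod n = 0" "(n - t mod n + t) mod n = 0" if "0 < n"
    using that by (simp_all add: add.commute)
  moreover have "0 < n" if "x \<in> dgp_verts n" for x
    using that by (cases x) auto
  ultimately show "\<forall>x\<in>dgp_verts n. dgp_shift n (n - t mod n) b (dgp_shift n t b x) = x"
    and "\<forall>x\<in>dgp_verts n. dgp_shift n t b (dgp_shift n (n - t mod n) b x) = x"
    by (simp_all add: dgp_shift_shift dgp_shift_period dgp_shift_verts)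
  show "\<forall>x. x \<notin> dgp_verts n \<longrightarrow> dgp_shift n t b x = x"
    by (metis dgp_shift_simps dgp_verts_simps dvert.exhaust)
qed (use dgp_shift_verts dgp_shift_edge[of "{x, y}" for x y] in auto)

abbreviation dgp_related :: "nat \<Rightarrow> nat \<Rightarrow> dvert set \<Rightarrow> dvert set \<Rightarrow> bool" where
  "dgp_related n k \<equiv> aut_related (dgp_verts n) (dgp_edges n k)"

lemma dgp_related_within_pattern:
  assumes shift: "\<And>i j. i < n \<Longrightarrow> p i j = dgp_shift n i j ` p 0 False"
    and base: "p 0 False \<subseteq> dgp_verts n"
    and "e \<in> {p i j | i j. i < n}" and "e' \<in> {p i j | i j. i < n}"
  shows "dgp_related n k e e'"
proof -
  have "dgp_related n k (p 0 False) (p i j)" if "i < n" for i j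
    using aut_related_image[of "dgp_shift n i j"] dgp_shift_in_A_grp shift[OF that]
    unfolding A_grp_def by metis
  then show ?thesis
    using assms(3,4) aut_related_common_source[OF _ _ base] by blast
qed

lemma dgp_outer_related: "e \<in> dgp_outer n \<Longrightarrow> e' \<in> dgp_outer n \<Longrightarrow> dgp_related n k e e'"
  unfolding dgp_outer_def by (rule dgp_related_within_pattern) (auto simp: mod_simps ac_simps)

lemma dgp_spokes_related: "e \<in> dgp_spokes n \<Longrightarrow> e' \<in> dgp_spokes n \<Longrightarrow> dgp_related n k e e'"
  unfolding dgp_spokes_def by (rule dgp_related_within_pattern) auto

lemma dgp_inner_related: "e \<in> dgp_inner n k \<Longrightarrow> e' \<in> dgp_inner n k \<Longrightarrow> dgp_related n k e e'"
  unfolding dgp_inner_def by (rule dgp_related_within_pattern) (auto simp: mod_simps ac_simps)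

lemma dgp_edge_transitiveI:
  assumes s: "s \<in> dgp_spokes n"
    and "e\<^sub>O \<in> dgp_outer n" and "dgp_related n k s e\<^sub>O"
    and "e\<^sub>I \<in> dgp_inner n k" and "dgp_related n k s e\<^sub>I"
  shows "edge_transitive (dgp_verts n) (dgp_edges n k)"
proof (rule edge_transitiveI)
  show "\<forall>e\<in>dgp_edges n k. e \<subseteq> dgp_verts n"
    using dgp_edge_subset_verts by blast
  show "s \<in> dgp_edges n k"
    using s unfolding dgp_edges_def by blast
  show "\<forall>e\<in>dgp_edges n k. dgp_related n k s e"
  proof
    fix e assume "e \<in> dgp_edges n k"
    then consider "e \<in> dgp_outer n" | "e \<in> dgp_spokes n" | "e \<in> dgp_inner n k"
      unfolding dgp_edges_def by blast
    then show "dgp_related n k s e"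
    proof cases
      case 1
      then show ?thesis
        using assms(2,3) dgp_outer_related aut_related_trans by blast
    next
      case 2
      then show ?thesis
        using s dgp_spokes_related by blast
    next
      case 3
      then show ?thesis
        using assms(4,5) dgp_inner_related aut_related_trans by blast
    qed
  qed
qed

lemma dgp_edge_transitive_if_spoke_to_outer:
  assumes g: "g \<in> A_grp n k" and s: "s \<in> dgp_spokes n" and gs: "g ` s \<in> dgp_outer n"
  shows "edge_transitive (dgp_verts n) (dgp_edges n k)"
proof -
  obtain a c where a: "a < n" and s_eq: "s = {U a c, V a (\<not> c)}"
    using s unfolding dgp_spokes_def by blast
  define e where "e = {V a (\<not> c), V ((a + k) mod n) (\<not> \<not> c)}"
  have e: "e \<in> dgp_inner n k"
    unfolding e_def using a by (rule dgp_innerI)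
  have "is_U (g (V a (\<not> c)))"
    using gs s_eq dgp_outer_is_U by blast
  then have "g ` e \<notin> dgp_inner n k"
    unfolding e_def using dgp_inner_not_is_U by blast
  moreover have "g ` e \<in> dgp_edges n k"
    using A_grp_image_edge[OF g] e unfolding dgp_edges_def by blast
  ultimately have ge: "g ` e \<in> dgp_outer n \<union> dgp_spokes n"
    unfolding dgp_edges_def by blast
  have s_gs: "dgp_related n k s (g ` s)" and e_ge: "dgp_related n k e (g ` e)"
    using g aut_related_image unfolding A_grp_def by blast+
  have "dgp_related n k s (g ` e)"
    using ge s_gs gs s dgp_outer_related dgp_spokes_related aut_related_trans by blast
  moreover have "dgp_related n k (g ` e) e"
    using aut_related_sym[OF e_ge] e dgp_edge_subset_verts unfolding dgp_edges_def by blast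
  ultimately have "dgp_related n k s e"
    by (rule aut_related_trans)
  then show ?thesis
    using dgp_edge_transitiveI[OF s gs s_gs e] by blast
qed

lemma dgp_edge_transitive_if_spoke_to_inner:
  assumes g: "g \<in> A_grp n k" and s: "s \<in> dgp_spokes n" and gs: "g ` s \<in> dgp_inner n k"
  shows "edge_transitive (dgp_verts n) (dgp_edges n k)"
proof -
  obtain a c where a: "a < n" and s_eq: "s = {U a c, V a (\<not> c)}"
    using s unfolding dgp_spokes_def by blast
  define e where "e = {U a c, U ((a + 1) mod n) (\<not> c)}"
  have e: "e \<in> dgp_outer n"
    unfolding e_def using a by (rule dgp_outerI)
  have "\<not> is_U (g (U a c))"
    using gs s_eq dgp_inner_not_is_U by blast
  then have "g ` e \<notin> dgp_outer n"
    unfolding e_def using dgp_outer_is_U by blast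
  moreover have "g ` e \<in> dgp_edges n k"
    using A_grp_image_edge[OF g] e unfolding dgp_edges_def by blast
  ultimately have ge: "g ` e \<in> dgp_spokes n \<union> dgp_inner n k"
    unfolding dgp_edges_def by blast
  have s_gs: "dgp_related n k s (g ` s)" and e_ge: "dgp_related n k e (g ` e)"
    using g aut_related_image unfolding A_grp_def by blast+
  have "dgp_related n k s (g ` e)"
    using ge s_gs gs s dgp_inner_related dgp_spokes_related aut_related_trans by blast
  moreover have "dgp_related n k (g ` e) e"
    using aut_related_sym[OF e_ge] e dgp_edge_subset_verts unfolding dgp_edges_def by blast
  ultimately have "dgp_related n k s e"
    by (rule aut_related_trans)
  then show ?thesis
    using dgp_edge_transitiveI[OF s e _ gs s_gs] by blast
qed

lemma dgp_A_grp_ne_B_grp_if_edge_transitive: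
  assumes n: "0 < n" and edge_trans: "edge_transitive (dgp_verts n) (dgp_edges n k)"
  shows "A_grp n k \<noteq> B_grp n k"
proof -
  define s where "s = {U 0 False, V 0 True}"
  define t where "t = {U 0 False, U (1 mod n) True}"
  have s: "s \<in> dgp_spokes n"
    unfolding s_def using dgp_spokesI[OF n, of False] by simp
  have t: "t \<in> dgp_outer n"
    unfolding t_def using dgp_outerI[OF n, of False] by simp
  obtain f where f: "f \<in> A_grp n k" and "f ` s = t"
    using edge_trans s t unfolding edge_transitive_def A_grp_def dgp_edges_def by blast
  then have "f ` s \<notin> dgp_spokes n"
    using t dgp_outer_spokes_disjoint by blast
  then show ?thesis
    using f s unfolding B_grp_def by blast
qed

lemma dgp_edge_transitive_if_A_grp_ne_B_grp:
  assumes "A_grp n k \<noteq> B_grp n k"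
  shows "edge_transitive (dgp_verts n) (dgp_edges n k)"
proof -
  obtain f where "f \<in> A_grp n k" and "(\<lambda>e. f ` e) ` dgp_spokes n \<noteq> dgp_spokes n"
    using assms unfolding B_grp_def by blast
  moreover have "\<forall>e\<in>dgp_spokes n. e \<subseteq> dgp_verts n"
    using dgp_edge_subset_verts unfolding dgp_edges_def by blast
  ultimately obtain g s
    where g: "g \<in> A_grp n k" and s: "s \<in> dgp_spokes n" and gs: "g ` s \<notin> dgp_spokes n"
    using graph_aut_setwise_stable unfolding A_grp_def by metis
  then have "g ` s \<in> dgp_outer n \<or> g ` s \<in> dgp_inner n k"
    using A_grp_image_edge unfolding dgp_edges_def by blast
  then show ?thesis
    using dgp_edge_transitive_if_spoke_to_outer dgp_edge_transitive_if_spoke_to_inner g s by blast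
qed

theorem lemma5p6:
  fixes n k :: nat
  assumes "1 \<le> k" and "2 * k < n"
  shows "edge_transitive (dgp_verts n) (dgp_edges n k) \<longleftrightarrow> A_grp n k \<noteq> B_grp n k"
proof -
  have "0 < n"
    using assms by simp
  then show ?thesis
    using dgp_A_grp_ne_B_grp_if_edge_transitive dgp_edge_transitive_if_A_grp_ne_B_grp by blast
qed

end
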